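(* Let $A\in\mathbb{R}^{n\times n}$, $B\in\mathbb{R}^{n\times m}$, $Q=Q^T\succeq0$, $R=R^T\succ0$, and $\Gamma(X)=A^TX+XA+Q$. There exist $P\in\mathbb{R}^{n\times n}$ and a symmetric $\bar P\succ0$ such that $$\begin{bmatrix}-\Gamma(\bar P) & (P+P^T-\bar P-\bar P^T)B\\ B^T(P+P^T-\bar P-\bar P^T) & 4R\end{bmatrix}\succ0$$ if and only if $A$ is Hurwitz.
   Context: Matrix inequalities are in the Loewner sense (symmetric matrices). *)

theory Defs
  imports "HOL-Analysis.Analysis"
begin

definition symmetric_mat :: "real^'n^'n \<Rightarrow> bool" where
  "symmetric_mat M \<longleftrightarrow> transpose M = M"

definition pos_def :: "real^'n^'n \<Rightarrow> bool" where
  "pos_def M \<longleftrightarrow> symmetric_mat M \<and> (\<forall>x. x \<noteq> 0 \<longrightarrow> x \<bullet> (M *v x) > 0)"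

definition pos_semidef :: "real^'n^'n \<Rightarrow> bool" where
  "pos_semidef M \<longleftrightarrow> symmetric_mat M \<and> (\<forall>x. x \<bullet> (M *v x) \<ge> 0)"

definition cmat :: "real^'n^'m \<Rightarrow> complex^'n^'m" where
  "cmat A = (\<chi> i j. complex_of_real (A $ i $ j))"

definition hurwitz :: "real^'n^'n \<Rightarrow> bool" where
  "hurwitz A \<longleftrightarrow>
     (\<forall>(c::complex) (v::complex^'n). v \<noteq> 0 \<and> cmat A *v v = c *s v \<longrightarrow> Re c < 0)"

definition Gamma :: "real^'n^'n \<Rightarrow> real^'n^'n \<Rightarrow> real^'n^'n \<Rightarrow> real^'n^'n" where
  "Gamma A Q X = transpose A ** X + X ** A + Q"

definition block_mat ::
  "real^'n^'n \<Rightarrow> real^'m^'n \<Rightarrow> real^'n^'m \<Rightarrow> real^'m^'m \<Rightarrow> real^('n + 'm)^('n + 'm)" where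
  "block_mat M11 M12 M21 M22 =
     (\<chi> i j. case i of
        Inl a \<Rightarrow> (case j of Inl b \<Rightarrow> M11 $ a $ b | Inr b \<Rightarrow> M12 $ a $ b)
      | Inr a \<Rightarrow> (case j of Inl b \<Rightarrow> M21 $ a $ b | Inr b \<Rightarrow> M22 $ a $ b))"

end

theory Submission
  imports Defs "Jordan_Normal_Form.Schur_Decomposition"
begin

(* Lyapunov's theorem does all the work. If -Gamma(Pb) > 0 with Pb > 0, then V(x) = x' Pb x
   strictly decreases along A, and evaluating V on the real and imaginary parts of an
   eigenvector of A gives Re lambda < 0. Conversely, a Hurwitz A is triangularised over C,
   A = S T S^-1, and the scaling D = diag(eps^k) makes the strictly upper part of
   D^-1 T D so small that X = Re (W^* W) with W = D^-1 S^-1 satisfies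
   x' X A x <= -alpha x' X x; a large multiple of X then makes -Gamma positive definite.
   In the block matrix, P = Pb cancels the off-diagonal blocks, and the (1,1) block of a
   positive definite matrix is positive definite. *)

no_notation Matrix.scalar_prod (infix \<open>\<bullet>\<close> 70)
no_notation Matrix.vec_index (infixl \<open>$\<close> 100)

lemma matrix_vector_mult_uminus_left: "(- M) *v x = - (M *v (x::real^'n))"
  by (simp add: Finite_Cartesian_Product.vec_eq_iff matrix_vector_mult_def sum_negf)

lemma transpose_add: "transpose (X + Y) = transpose X + transpose (Y::real^'n^'m)"
  unfolding transpose_def by vector

lemma transpose_uminus: "transpose (- X) = - transpose (X::real^'n^'m)"
  unfolding transpose_def by vector

lemma inner_transpose_matrix: "x \<bullet> (transpose M *v y) = (M *v x) \<bullet> (y::real^'n)"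
  by (metis dot_lmul_matrix vector_transpose_matrix)

lemma symmetric_mat_inner_commute:
  assumes "symmetric_mat M"
  shows "x \<bullet> (M *v y) = y \<bullet> (M *v (x::real^'n))"
  using assms unfolding symmetric_mat_def by (metis inner_transpose_matrix inner_commute)

lemma symmetric_mat_entry: "symmetric_mat M \<Longrightarrow> M $ i $ j = M $ j $ i"
  unfolding symmetric_mat_def by (metis transpose_def vec_lambda_beta)

lemma pos_def_nonneg: "pos_def M \<Longrightarrow> 0 \<le> x \<bullet> (M *v x)"
  unfolding pos_def_def by (cases "x = 0") (auto simp: less_imp_le)

lemma pos_def_quadratic_forms_add_pos:
  assumes "pos_def M" "pos_def N" "x \<noteq> 0 \<or> y \<noteq> 0"
  shows "0 < x \<bullet> (M *v x) + y \<bullet> (N *v y)"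
  using assms(3)
proof
  assume "x \<noteq> 0"
  then show ?thesis using assms(1) pos_def_nonneg[OF assms(2), of y] unfolding pos_def_def by auto
next
  assume "y \<noteq> 0"
  then show ?thesis using assms(2) pos_def_nonneg[OF assms(1), of x] unfolding pos_def_def by auto
qed

lemma pos_def_scaleR:
  assumes "pos_def M" "0 < t"
  shows "pos_def (t *\<^sub>R M)"
  using assms unfolding pos_def_def symmetric_mat_def
  by (simp add: transpose_scalar flip: scaleR_matrix_vector_assoc)

lemma quadratic_form_upper_bound: "\<exists>c. \<forall>x. x \<bullet> (M *v x) \<le> c * (x \<bullet> (x::real^'n))"
proof -
  obtain K where K: "\<And>x. norm (M *v x) \<le> norm x * K"
    using bounded_linear.bounded[OF matrix_vector_mul_bounded_linear] by blast
  have "x \<bullet> (M *v x) \<le> K * (x \<bullet> x)" for x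
  proof -
    have "x \<bullet> (M *v x) \<le> norm x * norm (M *v x)" by (rule norm_cauchy_schwarz)
    also have "\<dots> \<le> norm x * (norm x * K)" by (rule mult_left_mono[OF K norm_ge_zero])
    finally show ?thesis by (simp add: dot_square_norm power2_eq_square mult_ac)
  qed
  then show ?thesis by blast
qed

lemma pos_def_quadratic_form_lower_bound:
  assumes "pos_def M"
  shows "\<exists>\<beta>>0. \<forall>x. \<beta> * (x \<bullet> x) \<le> x \<bullet> (M *v (x::real^'n))"
proof -
  let ?q = "\<lambda>x::real^'n. x \<bullet> (M *v x)"
  have "continuous_on (sphere 0 1) ?q"
    by (intro continuous_intros linear_continuous_on matrix_vector_mul_linear)
  moreover have "sphere (0::real^'n) 1 \<noteq> {}" by simp
  ultimately obtain u where u: "u \<in> sphere 0 1" and min: "\<And>y. y \<in> sphere 0 1 \<Longrightarrow> ?q u \<le> ?q y"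
    using continuous_attains_inf[OF compact_sphere] by blast
  have "u \<noteq> 0" using u by auto
  then have "?q u > 0" using assms unfolding pos_def_def by blast
  moreover have "?q u * (x \<bullet> x) \<le> ?q x" for x
  proof (cases "x = 0")
    case False
    then have "?q u \<le> ?q (x /\<^sub>R norm x)" by (intro min) simp
    also have "\<dots> = ?q x / (x \<bullet> x)"
      using False by (simp add: matrix_vector_mult_scaleR dot_square_norm power2_eq_square field_simps)
    finally show ?thesis using False by (simp add: field_simps)
  qed simp
  ultimately show ?thesis by blast
qed

section \<open>Block matrices\<close>

lemma sum_UNIV_sum:
  "sum f (UNIV :: ('a::finite + 'b::finite) set) = (\<Sum>a\<in>UNIV. f (Inl a)) + (\<Sum>b\<in>UNIV. f (Inr b))"
  by (subst UNIV_Plus_UNIV[symmetric], subst sum.Plus) (simp_all add: comp_def)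

lemma inner_block_mat:
  fixes x :: "real^('n::finite + 'm::finite)"
  defines "x1 \<equiv> (\<chi> a. x $ Inl a)" and "x2 \<equiv> (\<chi> b. x $ Inr b)"
  shows "x \<bullet> (block_mat M X Y N *v x) =
     x1 \<bullet> (M *v x1) + x1 \<bullet> (X *v x2) + x2 \<bullet> (Y *v x1) + x2 \<bullet> (N *v x2)"
proof -
  let ?w = "block_mat M X Y N *v x"
  have "?w $ Inl a = (M *v x1) $ a + (X *v x2) $ a" "?w $ Inr b = (Y *v x1) $ b + (N *v x2) $ b" for a b
    by (simp_all add: matrix_vector_mult_def block_mat_def sum_UNIV_sum x1_def x2_def)
  then show ?thesis
    by (simp add: inner_vec_def sum_UNIV_sum x1_def x2_def distrib_left sum.distrib)
qed

lemma symmetric_block_mat: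
  assumes "symmetric_mat M" "symmetric_mat N"
  shows "symmetric_mat (block_mat M X (transpose X) N)"
proof -
  have "transpose (block_mat M X (transpose X) N) $ i $ j = block_mat M X (transpose X) N $ i $ j" for i j
    using symmetric_mat_entry[OF assms(1)] symmetric_mat_entry[OF assms(2)]
    by (cases i; cases j) (simp_all add: transpose_def block_mat_def)
  then show ?thesis unfolding symmetric_mat_def by (simp add: Finite_Cartesian_Product.vec_eq_iff)
qed

lemma pos_def_block_mat_diag:
  fixes M :: "real^'n::finite^'n" and N :: "real^'m::finite^'m"
  assumes M: "pos_def M" and N: "pos_def N"
  shows "pos_def (block_mat M 0 0 N)"
  unfolding pos_def_def
proof (intro conjI allI impI)
  have "transpose (0::real^'m^'n) = 0"
    by (simp add: Finite_Cartesian_Product.vec_eq_iff transpose_def)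
  then show "symmetric_mat (block_mat M 0 0 N)"
    using symmetric_block_mat[of M N 0] assms unfolding pos_def_def by simp
  fix x :: "real^('n + 'm)" assume "x \<noteq> 0"
  let ?x1 = "\<chi> a. x $ Inl a" and ?x2 = "\<chi> b. x $ Inr b"
  have "?x1 \<noteq> 0 \<or> ?x2 \<noteq> 0"
  proof (rule ccontr)
    assume "\<not> ?thesis"
    then have "x $ i = 0" for i by (cases i) (auto simp: Finite_Cartesian_Product.vec_eq_iff)
    with \<open>x \<noteq> 0\<close> show False by (simp add: Finite_Cartesian_Product.vec_eq_iff)
  qed
  with M N have "?x1 \<bullet> (M *v ?x1) + ?x2 \<bullet> (N *v ?x2) > 0"
    by (rule pos_def_quadratic_forms_add_pos)
  then show "x \<bullet> (block_mat M 0 0 N *v x) > 0"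
    unfolding inner_block_mat by simp
qed

lemma pos_def_block_mat_upper_left:
  fixes M :: "real^'n::finite^'n" and X :: "real^'m::finite^'n"
  assumes "pos_def (block_mat M X Y N)"
  shows "pos_def M"
  unfolding pos_def_def
proof (intro conjI allI impI)
  show "symmetric_mat M"
    using symmetric_mat_entry[of "block_mat M X Y N" "Inl i" "Inl j" for i j] assms
    unfolding pos_def_def symmetric_mat_def
    by (simp add: block_mat_def Finite_Cartesian_Product.vec_eq_iff transpose_def)
  fix z :: "real^'n" assume "z \<noteq> 0"
  define x :: "real^('n + 'm)" where "x = (\<chi> i. case i of Inl a \<Rightarrow> z $ a | Inr b \<Rightarrow> 0)"
  have x1: "(\<chi> a. x $ Inl a) = z" and x2: "(\<chi> b. x $ Inr b) = 0"
    by (simp_all add: x_def Finite_Cartesian_Product.vec_eq_iff)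
  have "x \<noteq> 0"
  proof
    assume "x = 0"
    with x1 \<open>z \<noteq> 0\<close> show False by (simp add: Finite_Cartesian_Product.vec_eq_iff)
  qed
  then have "x \<bullet> (block_mat M X Y N *v x) > 0" using assms unfolding pos_def_def by blast
  then show "z \<bullet> (M *v z) > 0" unfolding inner_block_mat x1 x2 by simp
qed

lemma inner_Gamma:
  assumes "symmetric_mat X"
  shows "x \<bullet> (Gamma A Q X *v x) = 2 * (x \<bullet> (X *v (A *v x))) + x \<bullet> (Q *v x)"
proof -
  have "x \<bullet> ((transpose A ** X) *v x) = x \<bullet> (X *v (A *v x))"
    using symmetric_mat_inner_commute[OF assms]
    by (metis inner_transpose_matrix matrix_vector_mul_assoc)
  then show ?thesis
    by (simp add: Gamma_def matrix_vector_mult_add_rdistrib inner_add_right matrix_vector_mul_assoc)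
qed

lemma symmetric_mat_neg_Gamma:
  assumes "symmetric_mat X" "symmetric_mat Q"
  shows "symmetric_mat (- Gamma A Q X)"
proof -
  have "transpose (Gamma A Q X) = Gamma A Q X"
    using assms unfolding symmetric_mat_def Gamma_def
    by (simp add: transpose_add matrix_transpose_mul add_ac)
  then show ?thesis unfolding symmetric_mat_def transpose_uminus by simp
qed

lemma decrease_if_neg_Gamma_pos_def:
  assumes "pos_semidef Q" "symmetric_mat X" "pos_def (- Gamma A Q X)" "x \<noteq> 0"
  shows "x \<bullet> (X *v (A *v x)) < 0"
proof -
  have "0 < x \<bullet> (- Gamma A Q X *v x)" using assms(3,4) unfolding pos_def_def by blast
  also have "\<dots> = - 2 * (x \<bullet> (X *v (A *v x))) - x \<bullet> (Q *v x)"
    by (simp add: matrix_vector_mult_uminus_left inner_Gamma[OF assms(2)])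
  moreover have "0 \<le> x \<bullet> (Q *v x)" using assms(1) unfolding pos_semidef_def by blast
  ultimately show ?thesis by linarith
qed

lemma neg_Gamma_pos_def_if_decay:
  fixes A P Q :: "real^'n^'n"
  assumes Q: "pos_semidef Q" and P: "pos_def P" and "0 < \<alpha>"
    and decay: "\<And>x. x \<bullet> (P *v (A *v x)) \<le> - \<alpha> * (x \<bullet> (P *v x))"
  obtains X where "pos_def X" "pos_def (- Gamma A Q X)"
proof -
  obtain \<beta> where "0 < \<beta>" and P_ge: "\<And>x. \<beta> * (x \<bullet> x) \<le> x \<bullet> (P *v x)"
    using pos_def_quadratic_form_lower_bound[OF P] by blast
  obtain c where Q_le: "\<And>x. x \<bullet> (Q *v x) \<le> c * (x \<bullet> x)"
    using quadratic_form_upper_bound[of Q] by blast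
  have "0 < \<alpha> * \<beta>" using \<open>0 < \<alpha>\<close> \<open>0 < \<beta>\<close> by (rule mult_pos_pos)
  have "0 < \<bar>c\<bar> + 1" by (simp add: add_nonneg_pos)
  define t where "t = (\<bar>c\<bar> + 1) / (\<alpha> * \<beta>)"
  have "0 < t" unfolding t_def using \<open>0 < \<bar>c\<bar> + 1\<close> \<open>0 < \<alpha> * \<beta>\<close> by (rule divide_pos_pos)
  have t_\<alpha>\<beta>: "t * (\<alpha> * \<beta>) = \<bar>c\<bar> + 1" unfolding t_def using \<open>0 < \<alpha>\<close> \<open>0 < \<beta>\<close> by simp
  have X: "pos_def (t *\<^sub>R P)" using P \<open>0 < t\<close> by (rule pos_def_scaleR)
  have "0 < x \<bullet> (- Gamma A Q (t *\<^sub>R P) *v x)" if "x \<noteq> 0" for x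
  proof -
    have decay_x: "\<alpha> * (x \<bullet> (P *v x)) \<le> - (x \<bullet> (P *v (A *v x)))" using decay[of x] by linarith
    have "2 * (\<bar>c\<bar> + 1) * (x \<bullet> x) = 2 * (t * (\<alpha> * \<beta>)) * (x \<bullet> x)" by (simp only: t_\<alpha>\<beta>)
    also have "\<dots> = 2 * t * (\<alpha> * (\<beta> * (x \<bullet> x)))" by (simp only: mult.assoc)
    also have "\<dots> \<le> 2 * t * (\<alpha> * (x \<bullet> (P *v x)))"
      using \<open>0 < \<alpha>\<close> \<open>0 < t\<close> by (intro mult_left_mono P_ge) simp_all
    also have "\<dots> \<le> 2 * t * - (x \<bullet> (P *v (A *v x)))"
      using decay_x \<open>0 < t\<close> by (intro mult_left_mono) simp_all
    finally have lower: "2 * (\<bar>c\<bar> + 1) * (x \<bullet> x) \<le> 2 * t * - (x \<bullet> (P *v (A *v x)))" .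
    have "c < 2 * (\<bar>c\<bar> + 1)" by (simp add: abs_if)
    then have "c * (x \<bullet> x) < 2 * (\<bar>c\<bar> + 1) * (x \<bullet> x)"
      using \<open>x \<noteq> 0\<close> by (intro mult_strict_right_mono) simp_all
    moreover have "symmetric_mat (t *\<^sub>R P)" using X unfolding pos_def_def by blast
    then have "x \<bullet> (- Gamma A Q (t *\<^sub>R P) *v x) = 2 * t * - (x \<bullet> (P *v (A *v x))) - x \<bullet> (Q *v x)"
      by (simp add: matrix_vector_mult_uminus_left inner_Gamma flip: scaleR_matrix_vector_assoc)
    ultimately show ?thesis using lower Q_le[of x] by linarith
  qed
  moreover have "symmetric_mat (- Gamma A Q (t *\<^sub>R P))"
    using X Q unfolding pos_def_def pos_semidef_def by (blast intro: symmetric_mat_neg_Gamma)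
  ultimately have "pos_def (- Gamma A Q (t *\<^sub>R P))" unfolding pos_def_def by blast
  with X show thesis by (rule that)
qed

section \<open>Stability from a Lyapunov function\<close>

lemma matrix_vector_mult_Re_cmat: "A *v (\<chi> i. Re (v $ i)) = (\<chi> i. Re ((cmat A *v v) $ i))"
  by (simp add: Finite_Cartesian_Product.vec_eq_iff matrix_vector_mult_def cmat_def Re_sum)

lemma matrix_vector_mult_Im_cmat: "A *v (\<chi> i. Im (v $ i)) = (\<chi> i. Im ((cmat A *v v) $ i))"
  by (simp add: Finite_Cartesian_Product.vec_eq_iff matrix_vector_mult_def cmat_def Im_sum)

lemma hurwitz_if_lyapunov:
  fixes A P :: "real^'n^'n"
  assumes P: "pos_def P" and decrease: "\<And>x. x \<noteq> 0 \<Longrightarrow> x \<bullet> (P *v (A *v x)) < 0"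
  shows "hurwitz A"
  unfolding hurwitz_def
proof (intro allI impI, elim conjE)
  fix c :: complex and v :: "complex^'n"
  assume "v \<noteq> 0" and eigen: "cmat A *v v = c *s v"
  define a b :: "real^'n" where "a = (\<chi> i. Re (v $ i))" and "b = (\<chi> i. Im (v $ i))"
  have Aa: "A *v a = Re c *\<^sub>R a - Im c *\<^sub>R b" and Ab: "A *v b = Im c *\<^sub>R a + Re c *\<^sub>R b"
    unfolding a_def b_def matrix_vector_mult_Re_cmat matrix_vector_mult_Im_cmat eigen
    by (simp_all add: Finite_Cartesian_Product.vec_eq_iff algebra_simps)
  have ab: "a \<noteq> 0 \<or> b \<noteq> 0"
    using \<open>v \<noteq> 0\<close> by (auto simp: a_def b_def Finite_Cartesian_Product.vec_eq_iff complex_eq_iff)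
  have le: "x \<bullet> (P *v (A *v x)) \<le> 0" for x
    using decrease[of x] by (cases "x = 0") auto
  from ab have "a \<bullet> (P *v (A *v a)) + b \<bullet> (P *v (A *v b)) < 0"
  proof
    assume "a \<noteq> 0"
    then show ?thesis using decrease[of a] le[of b] by linarith
  next
    assume "b \<noteq> 0"
    then show ?thesis using decrease[of b] le[of a] by linarith
  qed
  also have "a \<bullet> (P *v (A *v a)) + b \<bullet> (P *v (A *v b)) = Re c * (a \<bullet> (P *v a) + b \<bullet> (P *v b))"
    using symmetric_mat_inner_commute[of P a b] P unfolding pos_def_def
    by (simp add: Aa Ab algebra_simps inner_diff_right inner_add_right)
  finally have "Re c * (a \<bullet> (P *v a) + b \<bullet> (P *v b)) < 0" .
  moreover have "a \<bullet> (P *v a) + b \<bullet> (P *v b) > 0"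
    using P P ab by (rule pos_def_quadratic_forms_add_pos)
  ultimately show "Re c < 0" by (simp add: mult_less_0_iff)
qed

section \<open>Lyapunov functions of Hurwitz matrices\<close>

lemma index_mult_mat_sum:
  assumes "A \<in> carrier_mat n m" "B \<in> carrier_mat m p" "i < n" "j < p"
  shows "(A * B) $$ (i, j) = (\<Sum>k<m. A $$ (i, k) * B $$ (k, j))"
  using assms by (simp add: scalar_prod_def lessThan_atLeast0)

lemma complex_schur_triangularization:
  fixes M :: "complex mat"
  assumes M: "M \<in> carrier_mat n n"
  obtains B P Q where "B \<in> carrier_mat n n" "P \<in> carrier_mat n n" "Q \<in> carrier_mat n n"
    "P * Q = 1\<^sub>m n" "Q * M = B * Q" "upper_triangular B"
    "\<And>k. k < n \<Longrightarrow> eigenvalue M (B $$ (k, k))"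
proof -
  obtain es where es: "char_poly M = (\<Prod>a\<leftarrow>es. [:- a, 1:])"
    using char_poly_factorized[OF M] by auto
  obtain B P Q where "schur_decomposition M es = (B, P, Q)"
    by (cases "schur_decomposition M es") auto
  with schur_decomposition[OF M es] have wit: "similar_mat_wit M B P Q"
    and "upper_triangular B" and diag: "diag_mat B = es" by auto
  note car = similar_mat_witD2[OF M wit]
  have "Q * M = Q * (P * (B * Q))" using car by (simp add: assoc_mult_mat[of P n n B n Q n])
  also have "\<dots> = (Q * P) * (B * Q)" by (rule assoc_mult_mat[symmetric]) (use car in auto)
  also have "\<dots> = B * Q" using car by simp
  finally have "Q * M = B * Q" .
  moreover have "eigenvalue M (B $$ (k, k))" if "k < n" for k
  proof -
    have "B $$ (k, k) \<in> set es" unfolding diag[symmetric] using that car by (auto simp: diag_mat_def)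
    then have "poly (char_poly M) (B $$ (k, k)) = 0" by (auto simp: es poly_prod_list prod_list_zero_iff)
    then show ?thesis using eigenvalue_root_char_poly[OF M] by simp
  qed
  ultimately show thesis using that car \<open>upper_triangular B\<close> by blast
qed

lemma upper_triangular_scaled_entry_le:
  fixes b :: "nat \<Rightarrow> nat \<Rightarrow> complex" and y :: "nat \<Rightarrow> complex"
  assumes upper: "\<And>k l. k < n \<Longrightarrow> l < k \<Longrightarrow> b k l = 0"
    and diag: "\<And>k. k < n \<Longrightarrow> Re (b k k) \<le> \<mu>"
    and \<epsilon>: "0 < \<epsilon>" "\<epsilon> \<le> 1"
    and y_le: "\<And>k. k < n \<Longrightarrow> (cmod (y k))\<^sup>2 \<le> S"
    and "k < n" "l < n"
  shows "Re (cnj (y k) * b k l * of_real (\<epsilon> ^ l / \<epsilon> ^ k) * y l)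
    \<le> (if l = k then \<mu> * (cmod (y k))\<^sup>2 else 0) + \<epsilon> * S * cmod (b k l)"
proof -
  have "0 \<le> S" using y_le[OF \<open>k < n\<close>] by (meson order_trans zero_le_power2)
  show ?thesis
  proof (cases l k rule: linorder_cases)
    case less
    then show ?thesis using upper \<open>k < n\<close> \<open>0 \<le> S\<close> \<epsilon> by simp
  next
    case equal
    have "Re (cnj (y k) * b k l * of_real (\<epsilon> ^ l / \<epsilon> ^ k) * y l) = Re (b k k) * (cmod (y k))\<^sup>2"
      using equal \<epsilon>(1) by (simp add: cmod_power2 algebra_simps) (simp add: power2_eq_square algebra_simps)
    also have "\<dots> \<le> \<mu> * (cmod (y k))\<^sup>2" using diag[OF \<open>k < n\<close>] by (simp add: mult_right_mono)
    moreover have "0 \<le> \<epsilon> * S * cmod (b k l)" using \<open>0 \<le> S\<close> \<epsilon>(1) by simp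
    ultimately show ?thesis using equal by (smt (verit))
  next
    case greater
    have power: "\<epsilon> ^ l / \<epsilon> ^ k = \<epsilon> ^ (l - k)" using greater \<epsilon>(1) by (simp add: power_diff)
    have "\<epsilon> ^ (l - k) \<le> \<epsilon>" using power_decreasing[of 1 "l - k" \<epsilon>] greater \<epsilon> by simp
    moreover have "2 * (cmod (y k) * cmod (y l)) \<le> (cmod (y k))\<^sup>2 + (cmod (y l))\<^sup>2"
      using sum_squares_bound[of "cmod (y k)" "cmod (y l)"] by (simp add: mult.assoc)
    then have "cmod (y k) * cmod (y l) \<le> S" using y_le[OF \<open>k < n\<close>] y_le[OF \<open>l < n\<close>] by linarith
    ultimately have "cmod (b k l) * \<epsilon> ^ (l - k) * (cmod (y k) * cmod (y l)) \<le> cmod (b k l) * \<epsilon> * S"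
      using \<epsilon>(1) by (intro mult_mono mult_left_mono) auto
    moreover have "Re (cnj (y k) * b k l * of_real (\<epsilon> ^ l / \<epsilon> ^ k) * y l)
        \<le> cmod (b k l) * \<epsilon> ^ (l - k) * (cmod (y k) * cmod (y l))"
      using complex_Re_le_cmod[of "cnj (y k) * b k l * of_real (\<epsilon> ^ l / \<epsilon> ^ k) * y l"] \<epsilon>(1)
      by (simp add: power norm_mult norm_power mult_ac)
    ultimately show ?thesis using greater by (simp add: mult_ac)
  qed
qed

(* Conjugating b by diag (eps^k) multiplies entry (k, l) by eps^(l - k); for small eps the
   strictly upper part is dominated by the diagonal, whose real parts are negative. *)
lemma upper_triangular_scaled_form_le:
  fixes b :: "nat \<Rightarrow> nat \<Rightarrow> complex"
  assumes upper: "\<And>k l. k < n \<Longrightarrow> l < k \<Longrightarrow> b k l = 0"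
    and stable: "\<And>k. k < n \<Longrightarrow> Re (b k k) < 0"
  obtains \<epsilon> \<mu> :: real where "0 < \<epsilon>" "\<mu> < 0"
    "\<And>y. Re (\<Sum>k<n. \<Sum>l<n. cnj (y k) * b k l * of_real (\<epsilon> ^ l / \<epsilon> ^ k) * y l)
       \<le> \<mu> * (\<Sum>k<n. (cmod (y k))\<^sup>2)"
proof -
  define \<mu> where "\<mu> = Max (insert (- 1) ((\<lambda>k. Re (b k k)) ` {..<n}))"
  have "\<mu> < 0" unfolding \<mu>_def using stable by (subst Max_less_iff) auto
  have diag: "Re (b k k) \<le> \<mu>" if "k < n" for k unfolding \<mu>_def using that by (intro Max_ge) auto
  define K where "K = (\<Sum>k<n. \<Sum>l<n. cmod (b k l))"
  have "0 \<le> K" unfolding K_def by (intro sum_nonneg norm_ge_zero)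
  define \<epsilon> where "\<epsilon> = min 1 (- \<mu> / (2 * (K + 1)))"
  have "0 < - \<mu> / (2 * (K + 1))" using \<open>\<mu> < 0\<close> \<open>0 \<le> K\<close> by (intro divide_pos_pos) auto
  then have \<epsilon>: "0 < \<epsilon>" "\<epsilon> \<le> 1" by (auto simp: \<epsilon>_def)
  have "\<epsilon> * K \<le> - \<mu> / (2 * (K + 1)) * (K + 1)"
    using \<open>0 \<le> K\<close> \<epsilon> by (intro mult_mono) (auto simp: \<epsilon>_def)
  also have "\<dots> = - \<mu> / 2" using \<open>0 \<le> K\<close> by (simp add: field_simps)
  finally have \<epsilon>K: "\<epsilon> * K \<le> - \<mu> / 2" .
  show thesis
  proof (rule that[of \<epsilon> "\<mu> / 2"])
    show "0 < \<epsilon>" "\<mu> / 2 < 0" using \<epsilon>(1) \<open>\<mu> < 0\<close> by simp_all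
    fix y :: "nat \<Rightarrow> complex"
    define S where "S = (\<Sum>k<n. (cmod (y k))\<^sup>2)"
    have "0 \<le> S" unfolding S_def by (intro sum_nonneg) simp
    have y_le: "(cmod (y k))\<^sup>2 \<le> S" if "k < n" for k
      unfolding S_def using that by (intro member_le_sum) auto
    have "Re (\<Sum>k<n. \<Sum>l<n. cnj (y k) * b k l * of_real (\<epsilon> ^ l / \<epsilon> ^ k) * y l)
        = (\<Sum>k<n. \<Sum>l<n. Re (cnj (y k) * b k l * of_real (\<epsilon> ^ l / \<epsilon> ^ k) * y l))"
      by (simp add: Re_sum)
    also have "\<dots> \<le> (\<Sum>k<n. \<Sum>l<n. (if l = k then \<mu> * (cmod (y k))\<^sup>2 else 0) + \<epsilon> * S * cmod (b k l))"
    proof (intro sum_mono)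
      fix k l assume "k \<in> {..<n}" "l \<in> {..<n}"
      then show "Re (cnj (y k) * b k l * of_real (\<epsilon> ^ l / \<epsilon> ^ k) * y l)
          \<le> (if l = k then \<mu> * (cmod (y k))\<^sup>2 else 0) + \<epsilon> * S * cmod (b k l)"
        by (intro upper_triangular_scaled_entry_le[where n = n]) (use upper diag \<epsilon> y_le in auto)
    qed
    also have "\<dots> = (\<Sum>k<n. \<mu> * (cmod (y k))\<^sup>2 + \<epsilon> * S * (\<Sum>l<n. cmod (b k l)))"
      by (intro sum.cong refl) (simp add: sum.distrib sum_distrib_left)
    also have "\<dots> = \<mu> * S + S * (\<epsilon> * K)"
      by (simp add: sum.distrib S_def K_def sum_distrib_left mult_ac)
    also have "\<dots> \<le> \<mu> * S + S * (- \<mu> / 2)"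
      using \<epsilon>K \<open>0 \<le> S\<close> by (intro add_left_mono mult_left_mono)
    also have "\<dots> = \<mu> / 2 * S" by simp
    finally show "Re (\<Sum>k<n. \<Sum>l<n. cnj (y k) * b k l * of_real (\<epsilon> ^ l / \<epsilon> ^ k) * y l)
       \<le> \<mu> / 2 * (\<Sum>k<n. (cmod (y k))\<^sup>2)" unfolding S_def .
  qed
qed

(* W encodes a complex matrix with rows indexed by nat and columns by 'n, of which
   real_gram_mat n W uses the first n rows: it is Re (W^* W). *)
definition cmat_vec_mult :: "(nat \<Rightarrow> 'n \<Rightarrow> complex) \<Rightarrow> real^'n \<Rightarrow> nat \<Rightarrow> complex" where
  "cmat_vec_mult W x k = (\<Sum>j\<in>UNIV. W k j * complex_of_real (x $ j))"

definition real_gram_mat :: "nat \<Rightarrow> (nat \<Rightarrow> 'n \<Rightarrow> complex) \<Rightarrow> real^'n^'n" where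
  "real_gram_mat n W = (\<chi> i j. Re (\<Sum>k<n. cnj (W k i) * W k j))"

lemma inner_real_gram_mat:
  fixes W :: "nat \<Rightarrow> 'n::finite \<Rightarrow> complex"
  shows "x \<bullet> (real_gram_mat n W *v u) = Re (\<Sum>k<n. cnj (cmat_vec_mult W x k) * cmat_vec_mult W u k)"
proof -
  define F where "F k i j = complex_of_real (x $ i * u $ j) * (cnj (W k i) * W k j)" for k i j
  have "(\<Sum>k<n. cnj (cmat_vec_mult W x k) * cmat_vec_mult W u k) = (\<Sum>k<n. \<Sum>i\<in>UNIV. \<Sum>j\<in>UNIV. F k i j)"
    unfolding cmat_vec_mult_def F_def cnj_sum sum_product by (intro sum.cong refl) (simp add: mult_ac)
  also have "\<dots> = (\<Sum>i\<in>UNIV. \<Sum>j\<in>UNIV. \<Sum>k<n. F k i j)"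
    by (subst sum.swap) (intro sum.cong refl sum.swap)
  also have "\<dots> = (\<Sum>i\<in>UNIV. \<Sum>j\<in>UNIV. of_real (x $ i * u $ j) * (\<Sum>k<n. cnj (W k i) * W k j))"
    by (simp add: F_def sum_distrib_left)
  finally have "Re (\<Sum>k<n. cnj (cmat_vec_mult W x k) * cmat_vec_mult W u k)
      = Re (\<Sum>i\<in>UNIV. \<Sum>j\<in>UNIV. of_real (x $ i * u $ j) * (\<Sum>k<n. cnj (W k i) * W k j))"
    by (rule arg_cong)
  also have "\<dots> = (\<Sum>i\<in>UNIV. \<Sum>j\<in>UNIV. x $ i * u $ j * Re (\<Sum>k<n. cnj (W k i) * W k j))"
    by (simp del: of_real_mult)
  also have "\<dots> = x \<bullet> (real_gram_mat n W *v u)"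
    by (simp add: inner_vec_def matrix_vector_mult_def real_gram_mat_def sum_distrib_left mult_ac)
  finally show ?thesis ..
qed

lemma quadratic_form_real_gram_mat:
  fixes W :: "nat \<Rightarrow> 'n::finite \<Rightarrow> complex"
  shows "x \<bullet> (real_gram_mat n W *v x) = (\<Sum>k<n. (cmod (cmat_vec_mult W x k))\<^sup>2)"
proof -
  have "cnj z * z = of_real ((cmod z)\<^sup>2)" for z by (metis complex_norm_square mult.commute)
  then show ?thesis by (simp add: inner_real_gram_mat Re_sum)
qed

lemma pos_def_real_gram_mat:
  fixes W :: "nat \<Rightarrow> 'n::finite \<Rightarrow> complex"
  assumes left_inverse: "\<And>i j. (\<Sum>k<n. L i k * W k j) = (if i = j then 1 else 0)"
  shows "pos_def (real_gram_mat n W)"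
  unfolding pos_def_def symmetric_mat_def
proof (intro conjI allI impI)
  show "transpose (real_gram_mat n W) = real_gram_mat n W"
    by (simp add: Finite_Cartesian_Product.vec_eq_iff transpose_def real_gram_mat_def mult.commute)
  fix x :: "real^'n" assume "x \<noteq> 0"
  have "\<exists>k<n. cmat_vec_mult W x k \<noteq> 0"
  proof (rule ccontr)
    assume all_zero: "\<not> ?thesis"
    have "(\<Sum>k<n. L i k * cmat_vec_mult W x k) = (\<Sum>k<n. \<Sum>j\<in>UNIV. L i k * W k j * of_real (x $ j))" for i
      unfolding cmat_vec_mult_def by (simp add: sum_distrib_left mult.assoc)
    also have "\<dots> i = (\<Sum>j\<in>UNIV. \<Sum>k<n. L i k * W k j * of_real (x $ j))" for i
      by (rule sum.swap)
    also have "\<dots> i = (\<Sum>j\<in>UNIV. (\<Sum>k<n. L i k * W k j) * of_real (x $ j))" for i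
      by (simp add: sum_distrib_right)
    also have "\<dots> i = (\<Sum>j\<in>UNIV. if i = j then of_real (x $ j) else 0)" for i
      by (intro sum.cong refl) (simp add: left_inverse)
    also have "\<dots> i = of_real (x $ i)" for i
      by simp
    finally have "x $ i = 0" for i using all_zero by simp
    with \<open>x \<noteq> 0\<close> show False by (simp add: Finite_Cartesian_Product.vec_eq_iff)
  qed
  then obtain k where "k < n" "cmat_vec_mult W x k \<noteq> 0" by blast
  then show "0 < x \<bullet> (real_gram_mat n W *v x)"
    unfolding quadratic_form_real_gram_mat by (intro sum_pos2[of _ k]) auto
qed

lemma cmat_vec_mult_matrix_vector_mult:
  assumes "\<And>i. (\<Sum>j\<in>UNIV. W k j * of_real (A $ j $ i)) = (\<Sum>l<n. T k l * W l i)"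
  shows "cmat_vec_mult W (A *v x) k = (\<Sum>l<n. T k l * cmat_vec_mult W x l)"
proof -
  have "cmat_vec_mult W (A *v x) k = (\<Sum>j\<in>UNIV. \<Sum>i\<in>UNIV. W k j * of_real (A $ j $ i) * of_real (x $ i))"
    by (simp add: cmat_vec_mult_def matrix_vector_mult_def sum_distrib_left mult.assoc)
  also have "\<dots> = (\<Sum>i\<in>UNIV. (\<Sum>j\<in>UNIV. W k j * of_real (A $ j $ i)) * of_real (x $ i))"
    by (subst sum.swap) (simp add: sum_distrib_right)
  also have "\<dots> = (\<Sum>i\<in>UNIV. \<Sum>l<n. T k l * (W l i * of_real (x $ i)))"
    by (simp add: assms sum_distrib_right mult.assoc)
  also have "\<dots> = (\<Sum>l<n. T k l * cmat_vec_mult W x l)"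
    by (subst sum.swap) (simp add: cmat_vec_mult_def sum_distrib_left)
  finally show ?thesis .
qed

lemma index_mult_mat_transport:
  fixes A :: "real^'n^'n"
  assumes e: "bij_betw e UNIV {..<n}"
    and M: "M \<in> carrier_mat n n" "\<And>i j. M $$ (e i, e j) = complex_of_real (A $ i $ j)"
    and Q: "Q \<in> carrier_mat m n" and "k < m"
  shows "(\<Sum>j\<in>UNIV. Q $$ (k, e j) * of_real (A $ j $ i)) = (Q * M) $$ (k, e i)"
proof -
  have "e i < n" using e by (auto simp: bij_betw_def)
  have "(\<Sum>j\<in>UNIV. Q $$ (k, e j) * of_real (A $ j $ i)) = (\<Sum>j<n. Q $$ (k, j) * M $$ (j, e i))"
    using sum.reindex_bij_betw[OF e, of "\<lambda>j. Q $$ (k, j) * M $$ (j, e i)"] by (simp add: M(2))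
  also have "\<dots> = (Q * M) $$ (k, e i)"
    by (rule index_mult_mat_sum[OF Q M(1) \<open>k < m\<close> \<open>e i < n\<close>, symmetric])
  finally show ?thesis .
qed

lemma pos_def_real_gram_mat_scaled:
  fixes e :: "'n::finite \<Rightarrow> nat" and P Q :: "complex mat"
  assumes e: "bij_betw e UNIV {..<n}"
    and car: "P \<in> carrier_mat n n" "Q \<in> carrier_mat n n" and PQ: "P * Q = 1\<^sub>m n" and "0 < \<epsilon>"
  shows "pos_def (real_gram_mat n (\<lambda>k j. Q $$ (k, e j) / of_real (\<epsilon> ^ k)))"
proof (rule pos_def_real_gram_mat)
  have e_less: "e i < n" for i using e by (auto simp: bij_betw_def)
  have e_eq_iff: "e i = e j \<longleftrightarrow> i = j" for i j using e by (auto simp: bij_betw_def inj_on_def)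
  fix i j
  have "(P * Q) $$ (e i, e j) = (\<Sum>k<n. P $$ (e i, k) * Q $$ (k, e j))"
    by (rule index_mult_mat_sum[OF car e_less e_less])
  also have "\<dots> = (\<Sum>k<n. P $$ (e i, k) * of_real (\<epsilon> ^ k) * (Q $$ (k, e j) / of_real (\<epsilon> ^ k)))"
    using \<open>0 < \<epsilon>\<close> by (intro sum.cong refl) simp
  finally show "(\<Sum>k<n. P $$ (e i, k) * of_real (\<epsilon> ^ k) * (Q $$ (k, e j) / of_real (\<epsilon> ^ k)))
      = (if i = j then 1 else 0)"
    using PQ e_less e_eq_iff by simp
qed

(* With D = diag (eps^k), the matrix W = D^-1 Q satisfies W A = (D^-1 B D) W. *)
lemma cmat_vec_mult_scaled_similarity:
  fixes A :: "real^'n^'n" and e :: "'n \<Rightarrow> nat" and M B Q :: "complex mat"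
  assumes e: "bij_betw e UNIV {..<n}"
    and M: "M \<in> carrier_mat n n" "\<And>i j. M $$ (e i, e j) = complex_of_real (A $ i $ j)"
    and car: "B \<in> carrier_mat n n" "Q \<in> carrier_mat n n" and QM: "Q * M = B * Q"
    and "0 < \<epsilon>" "k < n"
  defines "W \<equiv> \<lambda>k j. Q $$ (k, e j) / of_real (\<epsilon> ^ k)"
  shows "cmat_vec_mult W (A *v x) k = (\<Sum>l<n. B $$ (k, l) * of_real (\<epsilon> ^ l / \<epsilon> ^ k) * cmat_vec_mult W x l)"
proof (rule cmat_vec_mult_matrix_vector_mult)
  have "e i < n" for i using e by (auto simp: bij_betw_def)
  fix i
  have "(\<Sum>j\<in>UNIV. W k j * of_real (A $ j $ i))
      = (\<Sum>j\<in>UNIV. Q $$ (k, e j) * of_real (A $ j $ i)) / of_real (\<epsilon> ^ k)"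
    by (simp add: W_def sum_divide_distrib)
  also have "\<dots> = (B * Q) $$ (k, e i) / of_real (\<epsilon> ^ k)"
    by (simp only: index_mult_mat_transport[OF e M car(2) \<open>k < n\<close>] QM)
  also have "\<dots> = (\<Sum>l<n. B $$ (k, l) * Q $$ (l, e i)) / of_real (\<epsilon> ^ k)"
    by (simp only: index_mult_mat_sum[OF car \<open>k < n\<close> \<open>e i < n\<close>])
  also have "\<dots> = (\<Sum>l<n. B $$ (k, l) * of_real (\<epsilon> ^ l / \<epsilon> ^ k) * W l i)"
    unfolding sum_divide_distrib using \<open>0 < \<epsilon>\<close> by (intro sum.cong refl) (simp add: W_def)
  finally show "(\<Sum>j\<in>UNIV. W k j * of_real (A $ j $ i))
      = (\<Sum>l<n. B $$ (k, l) * of_real (\<epsilon> ^ l / \<epsilon> ^ k) * W l i)" .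
qed

lemma lyapunov_if_similar_upper_triangular:
  fixes A :: "real^'n^'n" and e :: "'n \<Rightarrow> nat" and M B P Q :: "complex mat"
  assumes e: "bij_betw e UNIV {..<n}"
    and M: "M \<in> carrier_mat n n" "\<And>i j. M $$ (e i, e j) = complex_of_real (A $ i $ j)"
    and car: "B \<in> carrier_mat n n" "P \<in> carrier_mat n n" "Q \<in> carrier_mat n n"
    and PQ: "P * Q = 1\<^sub>m n" and QM: "Q * M = B * Q" and upper: "upper_triangular B"
    and stable: "\<And>k. k < n \<Longrightarrow> Re (B $$ (k, k)) < 0"
  obtains X \<alpha> where "pos_def X" "0 < \<alpha>" "\<And>x. x \<bullet> (X *v (A *v x)) \<le> - \<alpha> * (x \<bullet> (X *v x))"
proof -
  have "B $$ (k, l) = 0" if "k < n" "l < k" for k l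
    using upper car(1) that unfolding upper_triangular_def by auto
  then obtain \<epsilon> \<mu> where "0 < \<epsilon>" "\<mu> < 0" and estimate:
    "\<And>y. Re (\<Sum>k<n. \<Sum>l<n. cnj (y k) * B $$ (k, l) * of_real (\<epsilon> ^ l / \<epsilon> ^ k) * y l)
       \<le> \<mu> * (\<Sum>k<n. (cmod (y k))\<^sup>2)"
    using upper_triangular_scaled_form_le[of n "\<lambda>k l. B $$ (k, l)"] stable by blast
  define W where "W = (\<lambda>k j. Q $$ (k, e j) / of_real (\<epsilon> ^ k))"
  define X where "X = real_gram_mat n W"
  have "pos_def X"
    unfolding X_def W_def using e car(2,3) PQ \<open>0 < \<epsilon>\<close> by (rule pos_def_real_gram_mat_scaled)
  have "x \<bullet> (X *v (A *v x)) \<le> \<mu> * (x \<bullet> (X *v x))" for x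
  proof -
    note intertwine = cmat_vec_mult_scaled_similarity[OF e M car(1,3) QM \<open>0 < \<epsilon>\<close>, folded W_def]
    have "x \<bullet> (X *v (A *v x)) = Re (\<Sum>k<n. cnj (cmat_vec_mult W x k) * cmat_vec_mult W (A *v x) k)"
      unfolding X_def by (rule inner_real_gram_mat)
    also have "\<dots> = Re (\<Sum>k<n. \<Sum>l<n. cnj (cmat_vec_mult W x k) * B $$ (k, l)
        * of_real (\<epsilon> ^ l / \<epsilon> ^ k) * cmat_vec_mult W x l)"
      by (intro arg_cong[where f = Re] sum.cong refl) (simp add: intertwine sum_distrib_left mult_ac)
    also have "\<dots> \<le> \<mu> * (x \<bullet> (X *v x))"
      unfolding X_def quadratic_form_real_gram_mat by (rule estimate)
    finally show ?thesis .
  qed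
  with \<open>\<mu> < 0\<close> \<open>pos_def X\<close> show thesis by (intro that[of X "- \<mu>"]) auto
qed

lemma cmat_eigenvector_if_eigenvalue:
  fixes A :: "real^'n^'n" and M :: "complex mat"
  assumes e: "bij_betw e UNIV {..<n}"
    and M: "M \<in> carrier_mat n n" "\<And>i j. M $$ (e i, e j) = complex_of_real (A $ i $ j)"
    and "eigenvalue M c"
  shows "\<exists>v. v \<noteq> 0 \<and> cmat A *v v = c *s v"
proof -
  obtain u where u: "u \<in> carrier_vec n" "u \<noteq> 0\<^sub>v n" "M *\<^sub>v u = c \<cdot>\<^sub>v u"
    using assms(4) M(1) unfolding eigenvalue_def eigenvector_def by auto
  have e_less: "e i < n" for i using e by (auto simp: bij_betw_def)
  define v :: "complex^'n" where "v = (\<chi> i. vec_index u (e i))"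
  have "(cmat A *v v) $ i = (c *s v) $ i" for i
  proof -
    have "(cmat A *v v) $ i = (\<Sum>j\<in>UNIV. M $$ (e i, e j) * vec_index u (e j))"
      by (simp add: cmat_def matrix_vector_mult_def v_def M(2))
    also have "\<dots> = vec_index (M *\<^sub>v u) (e i)"
      using M(1) u(1) e_less sum.reindex_bij_betw[OF e, of "\<lambda>k. M $$ (e i, k) * vec_index u k"]
      by (simp add: scalar_prod_def lessThan_atLeast0)
    also have "\<dots> = (c *s v) $ i" using u(1,3) e_less by (simp add: v_def)
    finally show ?thesis .
  qed
  moreover have "v \<noteq> 0"
  proof -
    obtain k where k: "k < n" "vec_index u k \<noteq> 0"
    proof (rule ccontr)
      assume "\<not> thesis"
      then have "\<forall>k<n. vec_index u k = 0" using that by blast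
      then have "u = 0\<^sub>v n" using u(1) by (intro eq_vecI) auto
      with u(2) show False by simp
    qed
    have "k \<in> range e" using e k(1) by (simp add: bij_betw_def)
    with k(2) show ?thesis by (auto simp: v_def Finite_Cartesian_Product.vec_eq_iff)
  qed
  ultimately show ?thesis by (auto simp: Finite_Cartesian_Product.vec_eq_iff)
qed

lemma hurwitz_imp_lyapunov:
  fixes A :: "real^'n^'n"
  assumes "hurwitz A"
  obtains X \<alpha> where "pos_def X" "0 < \<alpha>" "\<And>x. x \<bullet> (X *v (A *v x)) \<le> - \<alpha> * (x \<bullet> (X *v x))"
proof -
  define n where "n = CARD('n)"
  obtain e :: "'n \<Rightarrow> nat" where e: "bij_betw e UNIV {..<n}"
    using ex_bij_betw_finite_nat[of "UNIV :: 'n set"] by (auto simp: n_def lessThan_atLeast0)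
  define M where "M = Matrix.mat n n (\<lambda>(k, l). complex_of_real (A $ inv_into UNIV e k $ inv_into UNIV e l))"
  have e_less: "e i < n" for i using e by (auto simp: bij_betw_def)
  have M: "M \<in> carrier_mat n n" "M $$ (e i, e j) = complex_of_real (A $ i $ j)" for i j
    using e e_less by (auto simp: M_def bij_betw_def inv_f_f)
  obtain B P Q where car: "B \<in> carrier_mat n n" "P \<in> carrier_mat n n" "Q \<in> carrier_mat n n"
    and "P * Q = 1\<^sub>m n" "Q * M = B * Q" "upper_triangular B"
    and eigen: "\<And>k. k < n \<Longrightarrow> eigenvalue M (B $$ (k, k))"
    using complex_schur_triangularization[OF M(1)] by blast
  show thesis
  proof (rule lyapunov_if_similar_upper_triangular[OF e M car \<open>P * Q = 1\<^sub>m n\<close> \<open>Q * M = B * Q\<close>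
        \<open>upper_triangular B\<close>])
    fix k assume "k < n"
    show "Re (B $$ (k, k)) < 0"
      using cmat_eigenvector_if_eigenvalue[OF e M eigen[OF \<open>k < n\<close>]] assms unfolding hurwitz_def by blast
  qed (rule that)
qed

lemma hurwitz_iff_pos_def_neg_Gamma:
  fixes A Q :: "real^'n^'n"
  assumes "pos_semidef Q"
  shows "hurwitz A \<longleftrightarrow> (\<exists>X. pos_def X \<and> pos_def (- Gamma A Q X))"
proof
  assume "hurwitz A"
  then obtain P \<alpha> where "pos_def P" "0 < \<alpha>" "\<And>x. x \<bullet> (P *v (A *v x)) \<le> - \<alpha> * (x \<bullet> (P *v x))"
    by (erule hurwitz_imp_lyapunov)
  with assms obtain X where "pos_def X" "pos_def (- Gamma A Q X)"
    by (erule neg_Gamma_pos_def_if_decay)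
  then show "\<exists>X. pos_def X \<and> pos_def (- Gamma A Q X)" by blast
next
  assume "\<exists>X. pos_def X \<and> pos_def (- Gamma A Q X)"
  then obtain X where X: "pos_def X" and neg_Gamma: "pos_def (- Gamma A Q X)" by (elim exE conjE)
  have "symmetric_mat X" using X unfolding pos_def_def by blast
  show "hurwitz A"
  proof (rule hurwitz_if_lyapunov[OF X])
    fix x :: "real^'n" assume "x \<noteq> 0"
    with neg_Gamma show "x \<bullet> (X *v (A *v x)) < 0"
      by (rule decrease_if_neg_Gamma_pos_def[OF assms \<open>symmetric_mat X\<close>])
  qed
qed

lemma ex_pos_def_block_mat_iff:
  fixes A Q :: "real^'n^'n" and B :: "real^'m^'n" and N :: "real^'m^'m"
  assumes "pos_def N"
  shows "(\<exists>P Pb. symmetric_mat Pb \<and> pos_def Pb \<and> pos_def (block_mat (- Gamma A Q Pb)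
            ((P + transpose P - Pb - transpose Pb) ** B) (transpose B ** (P + transpose P - Pb - transpose Pb)) N))
    \<longleftrightarrow> (\<exists>X. pos_def X \<and> pos_def (- Gamma A Q X))"
proof (intro iffI; elim exE conjE)
  fix P Pb assume "pos_def Pb" and block: "pos_def (block_mat (- Gamma A Q Pb)
    ((P + transpose P - Pb - transpose Pb) ** B) (transpose B ** (P + transpose P - Pb - transpose Pb)) N)"
  from block have "pos_def (- Gamma A Q Pb)" by (rule pos_def_block_mat_upper_left)
  with \<open>pos_def Pb\<close> show "\<exists>X. pos_def X \<and> pos_def (- Gamma A Q X)" by blast
next
  fix X assume X: "pos_def X" and "pos_def (- Gamma A Q X)"
  then have "pos_def (block_mat (- Gamma A Q X) 0 0 N)"
    using assms by (intro pos_def_block_mat_diag)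
  moreover have "X + transpose X - X - transpose X = 0" by simp
  ultimately have "pos_def (block_mat (- Gamma A Q X) ((X + transpose X - X - transpose X) ** B)
      (transpose B ** (X + transpose X - X - transpose X)) N)"
    by (simp only: times0_left times0_right)
  moreover have "symmetric_mat X" using X unfolding pos_def_def by blast
  ultimately show "\<exists>P Pb. symmetric_mat Pb \<and> pos_def Pb \<and> pos_def (block_mat (- Gamma A Q Pb)
    ((P + transpose P - Pb - transpose Pb) ** B) (transpose B ** (P + transpose P - Pb - transpose Pb)) N)"
    using X by (intro exI[of _ X] conjI)
qed

theorem theorem5:
  fixes A Q :: "real^'n^'n" and B :: "real^'m^'n" and R :: "real^'m^'m"
  assumes "pos_semidef Q"
    and "pos_def R"
  shows "(\<exists>(P::real^'n^'n) (Pb::real^'n^'n).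
            symmetric_mat Pb \<and> pos_def Pb \<and>
            pos_def (block_mat
               (- Gamma A Q Pb)
               ((P + transpose P - Pb - transpose Pb) ** B)
               (transpose B ** (P + transpose P - Pb - transpose Pb))
               ((4::real) *\<^sub>R R)))
         \<longleftrightarrow> hurwitz A"
proof -
  have "pos_def ((4::real) *\<^sub>R R)" using assms(2) by (rule pos_def_scaleR) simp
  from ex_pos_def_block_mat_iff[OF this] show ?thesis
    unfolding hurwitz_iff_pos_def_neg_Gamma[OF assms(1)] .
qed

end
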